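(* Let $(X,d)$ be a complete metric space, let $k\geq 2$ and $0<\rho<1$, and let $\mu:X^k\to X$ be a $k$-mean that is nonexpansive and coordinatewise $\rho$-contractive. Then there exists a unique family of continuous means $\mu_n:X^n\to X$, one for every $n>k$, such that $\mu_{k+1}$ is a $\beta$-extension of $\mu$ and $\mu_{n+1}$ is a $\beta$-extension of $\mu_n$ for every $n>k$. Furthermore, each $\mu_n$ is nonexpansive and coordinatewise $\rho$-contractive.
   Context: A $k$-mean on a set $X$ is a map $\mu:X^k\to X$ with $\mu(x,\ldots,x)=x$ for all $x\in X$. For a $k$-mean $\mu$, the barycentric operator $\beta_\mu:X^{k+1}\to X^{k+1}$ is $\beta_\mu(\mathbf{x})=(\mu(\pi_{\neq 1}\mathbf{x}),\ldots,\mu(\pi_{\neq k+1}\mathbf{x}))$, where for $\mathbf{x}=(x_1,\ldots,x_{k+1})$, $\pi_{\neq j}\mathbf{x}=(x_1,\ldots,x_{j-1},x_{j+1},\ldots,x_{k+1})\in X^k$. A $(k+1)$-mean $\nu$ is a $\beta$-extension of $\mu$ if for every $\mathbf{x}\in X^{k+1}$, $\lim_n\beta_\mu^n(\mathbf{x})=(\nu(\mathbf{x}),\ldots,\nu(\mathbf{x}))$. A $k$-mean $\mu$ on a metric space is nonexpansive if $d(\mu(\mathbf{x}),\mu(\mathbf{y}))\leq\max_{1\le j\le k} d(x_j,y_j)$ for all $\mathbf{x},\mathbf{y}\in X^k$; it is coordinatewise $\rho$-contractive if $d(\mu(\mathbf{x}),\mu(\mathbf{y}))\leq\rho\, d(x_j,y_j)$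 whenever $\mathbf{x},\mathbf{y}\in X^k$ differ only in the $j$-th coordinate. *)

theory Defs
  imports "HOL-Analysis.Analysis"
begin

text \<open>Points of X^n are represented as lists of length n; an n-ary map
  X^n \<rightarrow> X is a function on lists, of which only the values on lists
  of length n matter.\<close>

definition is_mean :: "nat \<Rightarrow> ('a list \<Rightarrow> 'a) \<Rightarrow> bool" where
  "is_mean n \<mu> \<longleftrightarrow> (\<forall>x. \<mu> (replicate n x) = x)"

definition continuous_mean :: "nat \<Rightarrow> ('a::metric_space list \<Rightarrow> 'a) \<Rightarrow> bool" where
  "continuous_mean n \<mu> \<longleftrightarrow>
     (\<forall>xs. length xs = n \<longrightarrow> (\<forall>e>0. \<exists>d>0. \<forall>ys. length ys = n \<longrightarrow>
        (\<forall>i<n. dist (xs ! i) (ys ! i) < d) \<longrightarrow> dist (\<mu> xs) (\<mu> ys) < e))"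

definition nonexpansive_mean :: "nat \<Rightarrow> ('a::metric_space list \<Rightarrow> 'a) \<Rightarrow> bool" where
  "nonexpansive_mean n \<mu> \<longleftrightarrow>
     (\<forall>xs ys. length xs = n \<longrightarrow> length ys = n \<longrightarrow>
        dist (\<mu> xs) (\<mu> ys) \<le> (MAX j\<in>{..<n}. dist (xs ! j) (ys ! j)))"

definition coord_contractive :: "nat \<Rightarrow> real \<Rightarrow> ('a::metric_space list \<Rightarrow> 'a) \<Rightarrow> bool" where
  "coord_contractive n \<rho> \<mu> \<longleftrightarrow>
     (\<forall>xs ys j. length xs = n \<longrightarrow> length ys = n \<longrightarrow> j < n \<longrightarrow>
        (\<forall>i<n. i \<noteq> j \<longrightarrow> xs ! i = ys ! i) \<longrightarrow>
        dist (\<mu> xs) (\<mu> ys) \<le> \<rho> * dist (xs ! j) (ys ! j))"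

text \<open>pi_{\<noteq> j}: delete the j-th coordinate (0-based).\<close>
definition omit :: "nat \<Rightarrow> 'a list \<Rightarrow> 'a list" where
  "omit j xs = take j xs @ drop (Suc j) xs"

definition barycentric :: "('a list \<Rightarrow> 'a) \<Rightarrow> 'a list \<Rightarrow> 'a list" where
  "barycentric \<mu> xs = map (\<lambda>j. \<mu> (omit j xs)) [0..<length xs]"

text \<open>\<nu> (a (k+1)-mean) is a beta-extension of the k-mean \<mu>: iterates of the
  barycentric operator converge (in X^{k+1}, i.e. coordinatewise) to the diagonal point.\<close>
definition beta_extension :: "nat \<Rightarrow> ('a::metric_space list \<Rightarrow> 'a) \<Rightarrow> ('a list \<Rightarrow> 'a) \<Rightarrow> bool" where
  "beta_extension k \<mu> \<nu> \<longleftrightarrow> is_mean (Suc k) \<nu> \<and>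
     (\<forall>xs. length xs = Suc k \<longrightarrow>
        (\<forall>i<Suc k. (\<lambda>m. ((barycentric \<mu> ^^ m) xs) ! i) \<longlonglongrightarrow> \<nu> xs))"

end

theory Submission
  imports Defs
begin

text \<open>Since \<mu> is nonexpansive, so is the barycentric operator \<beta> for the max metric;
  and since the lists obtained from xs by omitting the coordinates p and p+1 differ only in
  position p, where they hold x_{p+1} and x_p, \<beta> contracts every gap d(x_p, x_{p+1}) by the
  factor \<rho>. Hence the diameter of \<beta>^m(xs) decays like \<rho>^m; as \<mu> is a mean, each coordinate
  of \<beta>^{m+1}(xs) lies within that diameter of the corresponding coordinate of \<beta>^m(xs), so all
  coordinates are Cauchy with a common limit \<nu>(xs). The extension \<nu> inherits nonexpansiveness
  as a limit, and coordinatewise \<rho>-contraction already from one application of \<beta>, so the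
  construction can be iterated. Uniqueness holds because a \<beta>-extension is the pointwise
  limit of the \<beta>-iterates.\<close>

lemma length_omit [simp]: "j < length xs \<Longrightarrow> length (omit j xs) = length xs - 1"
  by (simp add: omit_def)

lemma nth_omit:
  "j < length xs \<Longrightarrow> p < length xs - 1 \<Longrightarrow> omit j xs ! p = (if p < j then xs ! p else xs ! Suc p)"
  by (auto simp add: omit_def nth_append min_def)

lemma omit_replicate: "j < n \<Longrightarrow> omit j (replicate n x) = replicate (n - 1) x"
  by (simp add: omit_def replicate_add[symmetric])

lemma length_barycentric [simp]: "length (barycentric \<mu> xs) = length xs"
  by (simp add: barycentric_def)

lemma nth_barycentric [simp]: "i < length xs \<Longrightarrow> barycentric \<mu> xs ! i = \<mu> (omit i xs)"
  by (simp add: barycentric_def)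

lemma length_funpow_barycentric [simp]: "length ((barycentric \<mu> ^^ m) xs) = length xs"
  by (induction m) auto

lemma barycentric_replicate:
  "barycentric \<mu> (replicate (Suc k) x) = replicate (Suc k) (\<mu> (replicate k x))"
  by (auto simp: barycentric_def omit_replicate simp del: replicate_Suc upt_Suc intro!: nth_equalityI)

lemma funpow_barycentric_cong:
  assumes "\<And>ys. length ys = k \<Longrightarrow> \<mu>' ys = \<mu> ys" and "length xs = Suc k"
  shows "(barycentric \<mu>' ^^ m) xs = (barycentric \<mu> ^^ m) xs"
proof -
  have "barycentric \<mu>' zs = barycentric \<mu> zs" if "length zs = Suc k" for zs
    using assms(1) that by (simp add: barycentric_def)
  then show ?thesis
    using assms(2) by (induction m) simp_all
qed

lemma nonexpansive_mean_dist_le: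
  fixes \<mu> :: "'a::metric_space list \<Rightarrow> 'a"
  assumes "nonexpansive_mean n \<mu>" and "0 < n" and "length xs = n" and "length ys = n"
    and "\<And>j. j < n \<Longrightarrow> dist (xs ! j) (ys ! j) \<le> c"
  shows "dist (\<mu> xs) (\<mu> ys) \<le> c"
proof -
  have "(MAX j\<in>{..<n}. dist (xs ! j) (ys ! j)) \<le> c"
    using assms(2,5) by (subst Max_le_iff) auto
  then show ?thesis
    using assms(1,3,4) unfolding nonexpansive_mean_def by fastforce
qed

lemma nonexpansive_imp_continuous_mean:
  fixes \<mu> :: "'a::metric_space list \<Rightarrow> 'a"
  assumes "nonexpansive_mean n \<mu>" and "0 < n"
  shows "continuous_mean n \<mu>"
  unfolding continuous_mean_def
proof (intro allI impI exI conjI)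
  fix xs ys :: "'a list" and e :: real
  assume "length xs = n" "0 < e" "length ys = n" and close: "\<forall>i<n. dist (xs ! i) (ys ! i) < e"
  then have "dist (\<mu> xs) (\<mu> ys) \<le> (MAX j\<in>{..<n}. dist (xs ! j) (ys ! j))"
    using assms(1) unfolding nonexpansive_mean_def by blast
  also have "\<dots> < e"
    using \<open>0 < n\<close> close by (subst Max_less_iff) auto
  finally show "dist (\<mu> xs) (\<mu> ys) < e" .
qed

lemma dist_nth_le_gaps:
  fixes zs :: "'a::metric_space list"
  assumes gaps: "\<And>q. Suc q < length zs \<Longrightarrow> dist (zs ! q) (zs ! Suc q) \<le> a"
    and "i \<le> j" and "j < length zs"
  shows "dist (zs ! i) (zs ! j) \<le> real (j - i) * a"
  using assms(2,3)
proof (induction j rule: dec_induct)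
  case (step j)
  have "dist (zs ! i) (zs ! Suc j) \<le> dist (zs ! i) (zs ! j) + dist (zs ! j) (zs ! Suc j)"
    by (rule dist_triangle)
  also have "\<dots> \<le> real (j - i) * a + a"
    using step gaps[of j] by (intro add_mono) auto
  also have "\<dots> = real (Suc j - i) * a"
    using step.hyps by (simp add: Suc_diff_le algebra_simps)
  finally show ?case .
qed simp

lemma convergent_if_dist_Suc_le_geometric:
  fixes f :: "nat \<Rightarrow> 'a::{metric_space, complete_space}"
  assumes r: "0 \<le> r" "r < 1" and C: "0 \<le> C" and steps: "\<And>m. dist (f (Suc m)) (f m) \<le> C * r ^ m"
  shows "convergent f"
proof -
  have tail: "dist (f m) (f (m + p)) \<le> C * r ^ m * (1 - r ^ p) / (1 - r)" for m p
  proof (induction p)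
    case (Suc p)
    have "dist (f m) (f (m + Suc p)) \<le> dist (f m) (f (m + p)) + dist (f (Suc (m + p))) (f (m + p))"
      by (metis add_Suc_right dist_commute dist_triangle)
    also have "\<dots> \<le> C * r ^ m * (1 - r ^ p) / (1 - r) + C * r ^ (m + p)"
      using Suc steps by (meson add_mono)
    also have "\<dots> = C * r ^ m * (1 - r ^ Suc p) / (1 - r)"
      using r by (simp add: field_simps power_add)
    finally show ?case .
  qed simp
  have tail_bound: "dist (f m) (f n) \<le> C * r ^ m / (1 - r)" if "m \<le> n" for m n
  proof -
    have "C * r ^ m * (1 - r ^ (n - m)) \<le> C * r ^ m"
      using r C by (simp add: mult_left_le)
    then show ?thesis
      using tail[of m "n - m"] that r by (simp add: divide_right_mono order_trans)
  qed
  have "(\<lambda>m. C * r ^ m / (1 - r)) \<longlonglongrightarrow> 0"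
    using r by (intro tendsto_divide_zero tendsto_mult_right_zero LIMSEQ_power_zero) auto
  have "Cauchy f"
  proof (rule CauchyI')
    fix e :: real
    assume "0 < e"
    then obtain M where "\<forall>m\<ge>M. C * r ^ m / (1 - r) < e"
      using order_tendstoD(2)[OF \<open>(\<lambda>m. C * r ^ m / (1 - r)) \<longlonglongrightarrow> 0\<close>]
      by (auto simp: eventually_sequentially)
    then show "\<exists>M. \<forall>m\<ge>M. \<forall>n>m. dist (f m) (f n) < e"
      using tail_bound by (meson le_less_trans less_imp_le)
  qed
  then show ?thesis
    using Cauchy_convergent by blast
qed

definition barycentric_limit :: "('a::metric_space list \<Rightarrow> 'a) \<Rightarrow> 'a list \<Rightarrow> 'a" where
  "barycentric_limit \<mu> xs = lim (\<lambda>m. (barycentric \<mu> ^^ m) xs ! 0)"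

locale contractive_mean =
  fixes \<mu> :: "'a::{metric_space, complete_space} list \<Rightarrow> 'a" and k :: nat and \<rho> :: real
  assumes arity_pos: "0 < k"
    and rho_nonneg: "0 \<le> \<rho>" and rho_less_1: "\<rho> < 1"
    and mean: "is_mean k \<mu>"
    and nonexpansive: "nonexpansive_mean k \<mu>"
    and contractive: "coord_contractive k \<rho> \<mu>"
begin

lemma barycentric_dist_le:
  assumes "length xs = Suc k" "length ys = Suc k" "\<And>i. i < Suc k \<Longrightarrow> dist (xs ! i) (ys ! i) \<le> c"
    and "i < Suc k"
  shows "dist (barycentric \<mu> xs ! i) (barycentric \<mu> ys ! i) \<le> c"
proof -
  have "dist (\<mu> (omit i xs)) (\<mu> (omit i ys)) \<le> c"
    by (rule nonexpansive_mean_dist_le[OF nonexpansive arity_pos])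
      (use assms in \<open>auto simp: nth_omit\<close>)
  then show ?thesis
    using assms by simp
qed

lemma funpow_barycentric_dist_le:
  assumes "length xs = Suc k" "length ys = Suc k" "\<And>i. i < Suc k \<Longrightarrow> dist (xs ! i) (ys ! i) \<le> c"
    and "i < Suc k"
  shows "dist ((barycentric \<mu> ^^ m) xs ! i) ((barycentric \<mu> ^^ m) ys ! i) \<le> c"
  using assms(4)
proof (induction m arbitrary: i)
  case (Suc m)
  then show ?case
    using barycentric_dist_le[of "(barycentric \<mu> ^^ m) xs" "(barycentric \<mu> ^^ m) ys"] assms(1,2)
    by simp
qed (use assms in simp)

lemma barycentric_gap_le:
  assumes "length zs = Suc k" and "p < k"
  shows "dist (barycentric \<mu> zs ! p) (barycentric \<mu> zs ! Suc p) \<le> \<rho> * dist (zs ! p) (zs ! Suc p)"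
proof -
  have "length (omit p zs) = k" "length (omit (Suc p) zs) = k"
    and "\<forall>i<k. i \<noteq> p \<longrightarrow> omit p zs ! i = omit (Suc p) zs ! i"
    using assms by (auto simp: nth_omit)
  then have "dist (\<mu> (omit p zs)) (\<mu> (omit (Suc p) zs)) \<le> \<rho> * dist (omit p zs ! p) (omit (Suc p) zs ! p)"
    using contractive \<open>p < k\<close> unfolding coord_contractive_def by blast
  moreover have "omit p zs ! p = zs ! Suc p" "omit (Suc p) zs ! p = zs ! p"
    using assms by (simp_all add: nth_omit)
  ultimately show ?thesis
    using assms by (simp add: dist_commute)
qed

lemma funpow_barycentric_gap_le:
  fixes a :: real
  assumes "length xs = Suc k" and gaps: "\<And>q. q < k \<Longrightarrow> dist (xs ! q) (xs ! Suc q) \<le> a"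
    and "p < k"
  shows "dist ((barycentric \<mu> ^^ m) xs ! p) ((barycentric \<mu> ^^ m) xs ! Suc p) \<le> \<rho> ^ m * a"
  using assms(3)
proof (induction m arbitrary: p)
  case (Suc m)
  have "dist ((barycentric \<mu> ^^ Suc m) xs ! p) ((barycentric \<mu> ^^ Suc m) xs ! Suc p)
     \<le> \<rho> * dist ((barycentric \<mu> ^^ m) xs ! p) ((barycentric \<mu> ^^ m) xs ! Suc p)"
    using barycentric_gap_le[of "(barycentric \<mu> ^^ m) xs" p] Suc.prems assms(1) by simp
  also have "\<dots> \<le> \<rho> * (\<rho> ^ m * a)"
    using Suc rho_nonneg by (intro mult_left_mono) auto
  finally show ?case
    by simp
qed (use gaps in simp)

lemma funpow_barycentric_diameter:
  fixes a :: real
  assumes "length xs = Suc k" and gaps: "\<And>q. q < k \<Longrightarrow> dist (xs ! q) (xs ! Suc q) \<le> a"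
    and "i < Suc k" "j < Suc k"
  shows "dist ((barycentric \<mu> ^^ m) xs ! i) ((barycentric \<mu> ^^ m) xs ! j) \<le> k * a * \<rho> ^ m"
proof -
  have "0 \<le> a"
    using gaps[of 0] arity_pos zero_le_dist order_trans by blast
  then have "0 \<le> \<rho> ^ m * a"
    using rho_nonneg by simp
  have chain: "dist ((barycentric \<mu> ^^ m) xs ! i') ((barycentric \<mu> ^^ m) xs ! j') \<le> k * a * \<rho> ^ m"
    if "i' \<le> j'" "j' < Suc k" for i' j'
  proof -
    have "dist ((barycentric \<mu> ^^ m) xs ! i') ((barycentric \<mu> ^^ m) xs ! j') \<le> real (j' - i') * (\<rho> ^ m * a)"
      by (rule dist_nth_le_gaps) (use that funpow_barycentric_gap_le[OF assms(1) gaps] assms(1) in auto)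
    also have "\<dots> \<le> real k * (\<rho> ^ m * a)"
      using that \<open>0 \<le> \<rho> ^ m * a\<close> by (intro mult_right_mono) auto
    finally show ?thesis
      by (simp add: algebra_simps)
  qed
  show ?thesis
    using chain[of i j] chain[of j i] assms(3,4) by (cases "i \<le> j") (auto simp: dist_commute)
qed

lemma funpow_barycentric_step_le:
  fixes a :: real
  assumes "length xs = Suc k" and gaps: "\<And>q. q < k \<Longrightarrow> dist (xs ! q) (xs ! Suc q) \<le> a"
    and "i < Suc k"
  shows "dist ((barycentric \<mu> ^^ Suc m) xs ! i) ((barycentric \<mu> ^^ m) xs ! i) \<le> k * a * \<rho> ^ m"
proof -
  let ?y = "(barycentric \<mu> ^^ m) xs"
  have "dist (\<mu> (omit i ?y)) (\<mu> (replicate k (?y ! i))) \<le> k * a * \<rho> ^ m"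
    by (rule nonexpansive_mean_dist_le[OF nonexpansive arity_pos])
      (use assms funpow_barycentric_diameter[OF assms(1) gaps] in \<open>auto simp: nth_omit\<close>)
  moreover have "\<mu> (replicate k (?y ! i)) = ?y ! i"
    using mean unfolding is_mean_def by simp
  ultimately show ?thesis
    using assms by simp
qed

lemma funpow_barycentric_tendsto:
  assumes "length xs = Suc k" and "i < Suc k"
  shows "(\<lambda>m. (barycentric \<mu> ^^ m) xs ! i) \<longlonglongrightarrow> barycentric_limit \<mu> xs"
proof -
  define a where "a = (\<Sum>q<k. dist (xs ! q) (xs ! Suc q))"
  have gaps: "dist (xs ! q) (xs ! Suc q) \<le> a" if "q < k" for q
    unfolding a_def using that by (intro member_le_sum) auto
  have "0 \<le> k * a"
    unfolding a_def by (simp add: sum_nonneg)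
  have "convergent (\<lambda>m. (barycentric \<mu> ^^ m) xs ! 0)"
    by (rule convergent_if_dist_Suc_le_geometric[OF rho_nonneg rho_less_1 \<open>0 \<le> k * a\<close>])
      (use funpow_barycentric_step_le[OF assms(1) gaps] in simp)
  then have first: "(\<lambda>m. (barycentric \<mu> ^^ m) xs ! 0) \<longlonglongrightarrow> barycentric_limit \<mu> xs"
    unfolding barycentric_limit_def by (simp add: convergent_LIMSEQ_iff)
  have "(\<lambda>m. k * a * \<rho> ^ m + dist ((barycentric \<mu> ^^ m) xs ! 0) (barycentric_limit \<mu> xs)) \<longlonglongrightarrow> 0 + 0"
    using rho_nonneg rho_less_1 first
    by (intro tendsto_add tendsto_mult_right_zero LIMSEQ_power_zero tendsto_dist_iff[THEN iffD1]) auto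
  then show ?thesis
  proof (rule metric_tendsto_imp_tendsto[OF _ always_eventually, rule_format])
    fix m
    have "dist ((barycentric \<mu> ^^ m) xs ! i) (barycentric_limit \<mu> xs)
        \<le> dist ((barycentric \<mu> ^^ m) xs ! i) ((barycentric \<mu> ^^ m) xs ! 0)
          + dist ((barycentric \<mu> ^^ m) xs ! 0) (barycentric_limit \<mu> xs)"
      by (rule dist_triangle)
    also have "\<dots> \<le> k * a * \<rho> ^ m + dist ((barycentric \<mu> ^^ m) xs ! 0) (barycentric_limit \<mu> xs)"
      using funpow_barycentric_diameter[OF assms(1) gaps assms(2)] by simp
    finally show "dist ((barycentric \<mu> ^^ m) xs ! i) (barycentric_limit \<mu> xs)
        \<le> dist (k * a * \<rho> ^ m + dist ((barycentric \<mu> ^^ m) xs ! 0) (barycentric_limit \<mu> xs)) (0 + 0)"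
      using \<open>0 \<le> k * a\<close> rho_nonneg by simp
  qed
qed

lemma barycentric_limit_mean: "is_mean (Suc k) (barycentric_limit \<mu>)"
  unfolding is_mean_def
proof
  fix x
  have "barycentric \<mu> (replicate (Suc k) x) = replicate (Suc k) x"
    using mean by (simp add: barycentric_replicate is_mean_def del: replicate_Suc)
  then have "(barycentric \<mu> ^^ m) (replicate (Suc k) x) = replicate (Suc k) x" for m
    by (induction m) (simp_all del: replicate_Suc)
  then have "(\<lambda>m. (barycentric \<mu> ^^ m) (replicate (Suc k) x) ! 0) \<longlonglongrightarrow> x"
    by simp
  moreover have "(\<lambda>m. (barycentric \<mu> ^^ m) (replicate (Suc k) x) ! 0) \<longlonglongrightarrow> barycentric_limit \<mu> (replicate (Suc k) x)"
    by (rule funpow_barycentric_tendsto) auto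
  ultimately show "barycentric_limit \<mu> (replicate (Suc k) x) = x"
    using LIMSEQ_unique by blast
qed

lemma beta_extension_barycentric_limit: "beta_extension k \<mu> (barycentric_limit \<mu>)"
  unfolding beta_extension_def using barycentric_limit_mean funpow_barycentric_tendsto by blast

lemma barycentric_limit_dist_le:
  assumes "length xs = Suc k" "length ys = Suc k"
    and "\<And>i. i < Suc k \<Longrightarrow> dist (barycentric \<mu> xs ! i) (barycentric \<mu> ys ! i) \<le> c"
  shows "dist (barycentric_limit \<mu> xs) (barycentric_limit \<mu> ys) \<le> c"
proof -
  have lim: "(\<lambda>m. dist ((barycentric \<mu> ^^ Suc m) xs ! 0) ((barycentric \<mu> ^^ Suc m) ys ! 0))
      \<longlonglongrightarrow> dist (barycentric_limit \<mu> xs) (barycentric_limit \<mu> ys)"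
    using assms(1,2)
    by (intro tendsto_dist LIMSEQ_Suc[OF funpow_barycentric_tendsto]) auto
  have bound: "dist ((barycentric \<mu> ^^ Suc m) xs ! 0) ((barycentric \<mu> ^^ Suc m) ys ! 0) \<le> c" for m
    unfolding funpow_Suc_right comp_def
    by (rule funpow_barycentric_dist_le) (use assms in auto)
  show ?thesis
    by (rule LIMSEQ_le_const2[OF lim]) (use bound in auto)
qed

lemma nonexpansive_barycentric_limit: "nonexpansive_mean (Suc k) (barycentric_limit \<mu>)"
  unfolding nonexpansive_mean_def
proof (intro allI impI)
  fix xs ys :: "'a list"
  assume lengths: "length xs = Suc k" "length ys = Suc k"
  show "dist (barycentric_limit \<mu> xs) (barycentric_limit \<mu> ys) \<le> (MAX j\<in>{..<Suc k}. dist (xs ! j) (ys ! j))"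
    by (intro barycentric_limit_dist_le lengths barycentric_dist_le) (auto intro: Max_ge)
qed

text \<open>If xs and ys differ only at position j, then for i \<noteq> j the lists omit i xs and
  omit i ys differ only at the position j' that x_j moves to, while omit j xs = omit j ys.\<close>
lemma barycentric_coord_contractive:
  assumes "length xs = Suc k" "length ys = Suc k" "j < Suc k"
    and same: "\<forall>i<Suc k. i \<noteq> j \<longrightarrow> xs ! i = ys ! i" and "i < Suc k"
  shows "dist (barycentric \<mu> xs ! i) (barycentric \<mu> ys ! i) \<le> \<rho> * dist (xs ! j) (ys ! j)"
proof (cases "i = j")
  case True
  then have "omit i xs = omit i ys"
    using assms by (intro nth_equalityI) (auto simp: nth_omit)
  then show ?thesis
    using assms rho_nonneg by simp
next
  case False
  define j' where "j' = (if j < i then j else j - 1)"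
  have "j' < k" "length (omit i xs) = k" "length (omit i ys) = k"
    using assms False unfolding j'_def by auto
  moreover have "\<forall>p<k. p \<noteq> j' \<longrightarrow> omit i xs ! p = omit i ys ! p"
    using assms False unfolding j'_def by (auto simp: nth_omit)
  ultimately have "dist (\<mu> (omit i xs)) (\<mu> (omit i ys)) \<le> \<rho> * dist (omit i xs ! j') (omit i ys ! j')"
    using contractive unfolding coord_contractive_def by blast
  moreover have "omit i xs ! j' = xs ! j" "omit i ys ! j' = ys ! j"
    using assms False \<open>j' < k\<close> unfolding j'_def by (auto simp: nth_omit)
  ultimately show ?thesis
    using assms by simp
qed

lemma coord_contractive_barycentric_limit: "coord_contractive (Suc k) \<rho> (barycentric_limit \<mu>)"
  unfolding coord_contractive_def
  using barycentric_limit_dist_le barycentric_coord_contractive by blast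

lemma contractive_mean_barycentric_limit: "contractive_mean (barycentric_limit \<mu>) (Suc k) \<rho>"
  using rho_nonneg rho_less_1 barycentric_limit_mean nonexpansive_barycentric_limit
    coord_contractive_barycentric_limit
  by unfold_locales auto

end

lemma beta_extension_unique:
  assumes "beta_extension k \<mu> \<nu>" "beta_extension k \<mu>' \<nu>'"
    and "\<And>ys. length ys = k \<Longrightarrow> \<mu>' ys = \<mu> ys" and "length xs = Suc k"
  shows "\<nu>' xs = \<nu> xs"
proof -
  have "(\<lambda>m. (barycentric \<mu> ^^ m) xs ! 0) \<longlonglongrightarrow> \<nu> xs"
    using assms(1,4) unfolding beta_extension_def by simp
  moreover have "(\<lambda>m. (barycentric \<mu>' ^^ m) xs ! 0) \<longlonglongrightarrow> \<nu>' xs"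
    using assms(2,4) unfolding beta_extension_def by simp
  then have "(\<lambda>m. (barycentric \<mu> ^^ m) xs ! 0) \<longlonglongrightarrow> \<nu>' xs"
    by (simp only: funpow_barycentric_cong[OF assms(3,4)])
  ultimately show ?thesis
    using LIMSEQ_unique by blast
qed

definition mean_tower :: "('a::metric_space list \<Rightarrow> 'a) \<Rightarrow> nat \<Rightarrow> nat \<Rightarrow> 'a list \<Rightarrow> 'a" where
  "mean_tower \<mu> k n = (barycentric_limit ^^ (n - k)) \<mu>"

lemma mean_tower_self [simp]: "mean_tower \<mu> k k = \<mu>"
  by (simp add: mean_tower_def)

lemma mean_tower_Suc: "k \<le> n \<Longrightarrow> mean_tower \<mu> k (Suc n) = barycentric_limit (mean_tower \<mu> k n)"
  by (simp add: mean_tower_def Suc_diff_le)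

context contractive_mean
begin

lemma contractive_mean_tower: "k \<le> n \<Longrightarrow> contractive_mean (mean_tower \<mu> k n) n \<rho>"
proof (induction n rule: nat_induct_at_least)
  case base
  show ?case
    by (simp add: contractive_mean_axioms)
next
  case (Suc n)
  then show ?case
    by (simp add: mean_tower_Suc contractive_mean.contractive_mean_barycentric_limit)
qed

lemma beta_extension_mean_tower:
  "k \<le> n \<Longrightarrow> beta_extension n (mean_tower \<mu> k n) (mean_tower \<mu> k (Suc n))"
  by (metis mean_tower_Suc contractive_mean.beta_extension_barycentric_limit contractive_mean_tower)

lemma mean_tower_unique:
  assumes "beta_extension k \<mu> (M (Suc k))" and "\<forall>n>k. beta_extension n (M n) (M (Suc n))"
    and "k < n" and "length xs = n"
  shows "M n xs = mean_tower \<mu> k n xs"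
  using assms(3,4) unfolding Suc_le_eq[symmetric]
proof (induction n arbitrary: xs rule: nat_induct_at_least)
  case base
  then show ?case
    using beta_extension_unique[OF beta_extension_mean_tower assms(1)] by simp
next
  case (Suc n)
  have "beta_extension n (M n) (M (Suc n))"
    using assms(2) Suc.hyps by simp
  from beta_extension_unique[OF beta_extension_mean_tower this] show ?case
    using Suc by simp
qed

end

theorem theorem3p14:
  fixes \<mu> :: "'a::{metric_space, complete_space} list \<Rightarrow> 'a"
    and k :: nat and \<rho> :: real
  assumes "k \<ge> 2" and "0 < \<rho>" and "\<rho> < 1"
    and "is_mean k \<mu>" and "nonexpansive_mean k \<mu>" and "coord_contractive k \<rho> \<mu>"
  shows "\<exists>M :: nat \<Rightarrow> 'a list \<Rightarrow> 'a.
           ((\<forall>n>k. is_mean n (M n) \<and> continuous_mean n (M n))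
            \<and> beta_extension k \<mu> (M (Suc k))
            \<and> (\<forall>n>k. beta_extension n (M n) (M (Suc n))))
         \<and> (\<forall>M' :: nat \<Rightarrow> 'a list \<Rightarrow> 'a.
              ((\<forall>n>k. is_mean n (M' n) \<and> continuous_mean n (M' n))
               \<and> beta_extension k \<mu> (M' (Suc k))
               \<and> (\<forall>n>k. beta_extension n (M' n) (M' (Suc n))))
              \<longrightarrow> (\<forall>n>k. \<forall>xs. length xs = n \<longrightarrow> M' n xs = M n xs))
         \<and> (\<forall>n>k. nonexpansive_mean n (M n) \<and> coord_contractive n \<rho> (M n))"
proof -
  interpret contractive_mean \<mu> k \<rho>
    using assms by unfold_locales auto
  have tower: "is_mean n (mean_tower \<mu> k n) \<and> continuous_mean n (mean_tower \<mu> k n)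
      \<and> nonexpansive_mean n (mean_tower \<mu> k n) \<and> coord_contractive n \<rho> (mean_tower \<mu> k n)"
    if "k < n" for n
    using contractive_mean_tower[of n] that nonexpansive_imp_continuous_mean
    unfolding contractive_mean_def by auto
  show ?thesis
  proof (intro exI[of _ "mean_tower \<mu> k"] conjI allI impI)
    show "beta_extension k \<mu> (mean_tower \<mu> k (Suc k))"
      using beta_extension_mean_tower[of k] by simp
  qed (use tower beta_extension_mean_tower mean_tower_unique in \<open>simp_all add: less_imp_le\<close>)
qed

end
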